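(* Given $\beta_0,\beta_1,\ldots\in\omega^\omega$, there exists $\alpha\in\omega^\omega$ such that for every continuous injective group homomorphism $\Phi:S_\infty\to S_\infty$ we have $\Phi(K_\alpha)\not\subseteq\bigcup_n K_{\beta_n}$.
   Context: $S_\infty$ is the group of all permutations of $\omega$ with the topology of pointwise convergence. For $\alpha\in\omega^\omega$, $K_\alpha=\{f\in S_\infty: f\le\alpha \text{ and } f^{-1}\le\alpha\}$, where $f\le\alpha$ means $f(n)\le\alpha(n)$ for all $n\in\omega$. *)

theory Defs
  imports "HOL-Analysis.Analysis" "HOL-Algebra.Bij"
begin

text \<open>As a set of functions it is
  the carrier of the symmetric group BijGroup UNIV; its topology is the subspace
  topology of the product (pointwise convergence) topology on nat => nat
  (nat carries the discrete topology).\<close>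
definition Sinf :: "(nat \<Rightarrow> nat) set" where
  "Sinf = {f. bij f}"

definition K :: "(nat \<Rightarrow> nat) \<Rightarrow> (nat \<Rightarrow> nat) set" where
  "K \<alpha> = {f \<in> Sinf. (\<forall>n. f n \<le> \<alpha> n) \<and> (\<forall>n. inv_into UNIV f n \<le> \<alpha> n)}"

end

(*
  Take \<alpha> dominating every \<beta> n in a strong sense. Given \<Phi>, an f \<in> K \<alpha> with \<Phi> f \<notin> K (\<beta> n)
  for all n is built by fusion: at stage n the current finitely supported approximation h
  is multiplied by at most one transposition (p q) with M \<le> p < q \<le> \<alpha> p beyond its support
  M, so that \<Phi> (h \<circ> (p q)) \<notin> K (\<beta> n); by continuity this persists for all later
  approximations and for the limit.

  Such a transposition exists. Otherwise, for a majorant B of \<beta> n, every \<Phi> (p q) in the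
  window is bounded by B^2, and since (a k) = (c k)(a c)(c k) this propagates to the bound
  B^(4r+2) on \<Phi> (a k) for all k \<le> \<alpha>^(r+1) a. Injectivity and continuity of \<Phi> give a point x
  and an a for which k \<mapsto> \<Phi> (a k) x is injective on a tail; as \<alpha>^(r+1) a outgrows
  B^(4r+2) x, these distinct values cannot all lie below the bound.
*)

theory Submission
  imports Defs "HOL-Combinatorics.Transposition"
begin

\<comment> \<open>unqualified \<open>transpose\<close> denotes matrix transposition once HOL-Analysis is loaded\<close>
abbreviation tr :: "nat \<Rightarrow> nat \<Rightarrow> nat \<Rightarrow> nat" where
  "tr \<equiv> Transposition.transpose"

section \<open>Iterates of growth functions\<close>

lemma funpow_ge_add: "(\<And>k. Suc k \<le> B k) \<Longrightarrow> x + j \<le> (B ^^ j) (x :: nat)"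
  by (induction j) (auto intro: Suc_leD order_trans)

lemma strict_mono_add_le: "strict_mono (B :: nat \<Rightarrow> nat) \<Longrightarrow> B x + d \<le> B (x + d)"
proof (induction d)
  case (Suc d)
  then have "B (x + d) < B (x + Suc d)" by (simp add: strict_mono_def)
  with Suc show ?case by simp
qed simp

lemma strict_mono_funpow: "strict_mono (B :: nat \<Rightarrow> nat) \<Longrightarrow> strict_mono (B ^^ j)"
  by (induction j) (auto simp: strict_mono_def)

lemma funpow_mult_le_funpow:
  fixes B \<alpha> :: "nat \<Rightarrow> nat"
  assumes "mono B" "\<And>k. Suc k \<le> \<alpha> k" "\<And>k. a \<le> k \<Longrightarrow> (B ^^ m) k \<le> \<alpha> k"
  shows "(B ^^ (m * j)) a \<le> (\<alpha> ^^ j) a"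
proof (induction j)
  case (Suc j)
  have "(B ^^ (m * Suc j)) a = (B ^^ m) ((B ^^ (m * j)) a)"
    by (metis add.commute comp_apply funpow_add mult_Suc_right)
  also have "\<dots> \<le> (B ^^ m) ((\<alpha> ^^ j) a)" using Suc funpow_mono[OF assms(1)] by blast
  also have "\<dots> \<le> \<alpha> ((\<alpha> ^^ j) a)" using assms(3) funpow_ge_add[of \<alpha> a j] assms(2) by simp
  finally show ?case by simp
qed simp

section \<open>Permutations with bounded displacement\<close>

definition bounded_by :: "(nat \<Rightarrow> nat) \<Rightarrow> (nat \<Rightarrow> nat) \<Rightarrow> bool" where
  "bounded_by C f \<longleftrightarrow> (\<forall>y. f y \<le> C y \<and> inv_into UNIV f y \<le> C y)"

lemma K_iff: "f \<in> K C \<longleftrightarrow> bij f \<and> bounded_by C f"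
  by (auto simp: K_def Sinf_def bounded_by_def)

lemma bounded_by_inv: "bij f \<Longrightarrow> bounded_by C f \<Longrightarrow> bounded_by C (inv_into UNIV f)"
  by (simp add: bounded_by_def inv_inv_eq)

lemma bounded_by_mono:
  "bounded_by C f \<Longrightarrow> (\<And>y. C y \<le> D y) \<Longrightarrow> bounded_by D f"
  unfolding bounded_by_def by (meson le_trans)

lemma bounded_by_comp:
  assumes "mono B" "bij f" "bij g" "bounded_by (B ^^ i) f" "bounded_by (B ^^ j) g"
  shows "bounded_by (B ^^ (i + j)) (f \<circ> g)"
proof -
  have "f (g y) \<le> (B ^^ (i + j)) y" for y
  proof -
    have "f (g y) \<le> (B ^^ i) (g y)" using assms(4) by (simp add: bounded_by_def)
    also have "\<dots> \<le> (B ^^ i) ((B ^^ j) y)"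
      using assms(5) funpow_mono[OF assms(1)] by (simp add: bounded_by_def)
    finally show ?thesis by (simp add: funpow_add)
  qed
  moreover have "inv_into UNIV g (inv_into UNIV f y) \<le> (B ^^ (i + j)) y" for y
  proof -
    have "inv_into UNIV g (inv_into UNIV f y) \<le> (B ^^ j) (inv_into UNIV f y)" using assms(5) by (simp add: bounded_by_def)
    also have "\<dots> \<le> (B ^^ j) ((B ^^ i) y)"
      using assms(4) funpow_mono[OF assms(1)] by (simp add: bounded_by_def)
    finally show ?thesis by (metis add.commute comp_apply funpow_add)
  qed
  ultimately show ?thesis using assms(2,3) by (simp add: bounded_by_def o_inv_distrib)
qed

lemma bounded_by_funpow_mono:
  assumes "mono B" "\<And>k. k \<le> B k" "i \<le> j" "bounded_by (B ^^ i) f"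
  shows "bounded_by (B ^^ j) f"
  using assms(4) by (rule bounded_by_mono) (use funpow_mono2 assms in blast)

lemma comp_transpose_in_K:
  assumes h: "h \<in> K \<alpha>" "\<forall>i\<ge>M. h i = i" and \<alpha>: "\<And>k. k \<le> \<alpha> k"
    and pq: "M \<le> p" "p < q" "q \<le> \<alpha> p"
  shows "h \<circ> tr p q \<in> K \<alpha>"
proof -
  have bij: "bij h" and hb: "bounded_by \<alpha> h" using h by (auto simp: K_iff)
  have tb: "tr p q i \<le> \<alpha> i" for i
    using pq \<alpha>[of i] \<alpha>[of q] by (auto simp: Transposition.transpose_def)
  have inv_high: "inv_into UNIV h i = i" if "M \<le> i" for i using h bij that by (metis bij_is_inj inv_f_f)
  have inv_low: "inv_into UNIV h i < M" if "i < M" for i using h bij that by (metis bij_inv_eq_iff not_less)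
  have "(h \<circ> tr p q) i \<le> \<alpha> i" for i
  proof (cases "i < M")
    case True
    then show ?thesis using hb pq by (simp add: bounded_by_def)
  next
    case False
    then have "M \<le> tr p q i" using pq by (auto simp: Transposition.transpose_def)
    then show ?thesis using h tb by simp
  qed
  moreover have "inv_into UNIV (h \<circ> tr p q) i \<le> \<alpha> i" for i
  proof (cases "i < M")
    case True
    then show ?thesis using inv_low[OF True] hb pq bij by (simp add: bounded_by_def o_inv_distrib)
  next
    case False
    then show ?thesis using inv_high tb bij by (simp add: o_inv_distrib)
  qed
  ultimately show ?thesis using bij by (simp add: K_iff bounded_by_def bij_comp)
qed

lemma not_in_K_witness:
  assumes "bij f" "f \<notin> K b"
  shows "\<exists>z. \<forall>g. g z = f z \<longrightarrow> g \<notin> K b"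
proof -
  obtain y where "b y < f y \<or> b y < inv_into UNIV f y"
    using assms by (auto simp: K_iff bounded_by_def not_le)
  then show ?thesis
  proof
    assume "b y < f y"
    then show ?thesis by (auto simp: K_iff bounded_by_def not_le intro!: exI[of _ y])
  next
    assume less: "b y < inv_into UNIV f y"
    define z where "z = inv_into UNIV f y"
    have "f z = y" unfolding z_def using surj_f_inv_f[OF bij_is_surj[OF assms(1)]] .
    have "g \<notin> K b" if "g z = y" for g
    proof
      assume "g \<in> K b"
      then have "inv_into UNIV g y = z" using that by (metis K_iff bij_is_inj inv_f_f)
      moreover have "inv_into UNIV g y \<le> b y" using \<open>g \<in> K b\<close> by (simp add: K_iff bounded_by_def)
      ultimately show False using less by (simp add: z_def)
    qed
    with \<open>f z = y\<close> show ?thesis by auto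
  qed
qed

section \<open>Fusion in \<open>K \<alpha>\<close>\<close>

lemma K_limit:
  assumes K: "\<And>n. H n \<in> K \<alpha>" and Mn: "\<And>n. n \<le> Mn n" "\<And>n. Mn n \<le> Mn (Suc n)"
    and agree: "\<And>n i. i < Mn n \<Longrightarrow> H (Suc n) i = H n i"
  shows "\<exists>f\<in>K \<alpha>. \<forall>n i. i < Mn n \<longrightarrow> f i = H n i"
proof -
  have bij: "bij (H n)" and bound: "bounded_by \<alpha> (H n)" for n using K by (auto simp: K_iff)
  have stable: "H m i = H n i" if "n \<le> m" "i < Mn n" for n m i
    using that
  proof (induction m rule: dec_induct)
    case (step m)
    have "Mn n \<le> Mn m" using lift_Suc_mono_le[of Mn, OF Mn(2) step(1)] .
    then show ?case using agree[of i m] step by simp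
  qed simp
  define f where "f k = H (Suc k) k" for k
  have f_eq: "f i = H n i" if "i < Mn n" for i n
  proof -
    have "i < Mn (Suc i)" using Mn(1)[of "Suc i"] by simp
    then show ?thesis
      using stable[of n "max n (Suc i)" i] stable[of "Suc i" "max n (Suc i)" i] that
      by (simp add: f_def)
  qed
  have "inj f"
  proof (rule injI)
    fix i j assume "f i = f j"
    moreover have "i < Mn (Suc (i + j))" "j < Mn (Suc (i + j))" using Mn(1)[of "Suc (i + j)"] by auto
    ultimately have "H (Suc (i + j)) i = H (Suc (i + j)) j" using f_eq by metis
    then show "i = j" using bij bij_is_inj injD by metis
  qed
  have preimage: "f j = y" "j \<le> \<alpha> y" if "j = inv_into UNIV (H (Suc (\<alpha> y))) y" for j y
  proof -
    show "j \<le> \<alpha> y" using bound that by (simp add: bounded_by_def)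
    then have "j < Mn (Suc (\<alpha> y))" using Mn(1)[of "Suc (\<alpha> y)"] by linarith
    then have "f j = H (Suc (\<alpha> y)) j" by (rule f_eq)
    moreover have "H (Suc (\<alpha> y)) j = y" using that bij by (simp add: bij_inv_eq_iff)
    ultimately show "f j = y" by simp
  qed
  have "bij f"
    using \<open>inj f\<close> surjI[of f "\<lambda>y. inv_into UNIV (H (Suc (\<alpha> y))) y"] preimage(1)[OF refl]
    by (simp add: bij_def)
  moreover have "f k \<le> \<alpha> k" for k using bound by (simp add: bounded_by_def f_def)
  moreover have "inv_into UNIV f y \<le> \<alpha> y" for y
    using preimage[OF refl, of y] \<open>inj f\<close> by (metis inv_f_f)
  ultimately have "f \<in> K \<alpha>" by (simp add: K_iff bounded_by_def)
  with f_eq show ?thesis by blast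
qed

lemma K_fusion:
  assumes "\<And>k. k \<le> \<alpha> k"
    and extend: "\<And>n h M. h \<in> K \<alpha> \<Longrightarrow> \<forall>i\<ge>M. h i = i \<Longrightarrow> n \<le> M \<Longrightarrow>
      \<exists>h' M'. (\<forall>i\<ge>M'. h' i = i) \<and> h' \<in> K \<alpha> \<and> M < M' \<and> (\<forall>i<M. h' i = h i)
        \<and> (\<forall>g\<in>Sinf. (\<forall>i<M'. g i = h' i) \<longrightarrow> Q n g)"
  shows "\<exists>f\<in>K \<alpha>. \<forall>n. Q n f"
proof -
  define P where "P n s \<longleftrightarrow> fst s \<in> K \<alpha> \<and> (\<forall>i\<ge>snd s. fst s i = i) \<and> n \<le> snd s"
    for n and s :: "(nat \<Rightarrow> nat) \<times> nat"
  define R where "R n s s' \<longleftrightarrow> snd s < snd s' \<and> (\<forall>i<snd s. fst s' i = fst s i)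
      \<and> (\<forall>g\<in>Sinf. (\<forall>i<snd s'. g i = fst s' i) \<longrightarrow> Q n g)"
    for n and s s' :: "(nat \<Rightarrow> nat) \<times> nat"
  have "id \<in> K \<alpha>" using assms(1) by (simp add: K_iff bounded_by_def)
  then have "\<exists>s. P 0 s" by (intro exI[of _ "(id, 0)"]) (simp add: P_def)
  moreover have "\<exists>s'. P (Suc n) s' \<and> R n s s'" if Pns: "P n s" for n s
  proof -
    obtain h' M' where "(\<forall>i\<ge>M'. h' i = i) \<and> h' \<in> K \<alpha> \<and> snd s < M' \<and> (\<forall>i<snd s. h' i = fst s i)
        \<and> (\<forall>g\<in>Sinf. (\<forall>i<M'. g i = h' i) \<longrightarrow> Q n g)"
      using extend[of "fst s" "snd s" n] Pns unfolding P_def by blast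
    then show ?thesis using Pns unfolding P_def R_def by (intro exI[of _ "(h', M')"]) auto
  qed
  ultimately obtain s where s: "\<And>n. P n (s n) \<and> R n (s n) (s (Suc n))"
    using dependent_nat_choice[of P R] by blast
  have "\<exists>f\<in>K \<alpha>. \<forall>n i. i < snd (s n) \<longrightarrow> f i = fst (s n) i"
    by (rule K_limit) (use s in \<open>auto simp: P_def R_def less_imp_le\<close>)
  then obtain f where f: "f \<in> K \<alpha>" "\<And>n i. i < snd (s n) \<Longrightarrow> f i = fst (s n) i" by blast
  then have "f \<in> Sinf" by (simp add: K_def)
  then have "Q n f" for n using s[of n] f(2)[of _ "Suc n"] unfolding R_def by blast
  then show ?thesis using f(1) by blast
qed

section \<open>Continuous injective endomorphisms of \<open>S\<^sub>\<infinity>\<close>\<close>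

lemma continuous_on_finite_prefix:
  fixes \<Phi> :: "(nat \<Rightarrow> 'a::topological_space) \<Rightarrow> nat \<Rightarrow> nat"
  assumes "continuous_on S \<Phi>" "f \<in> S"
  shows "\<exists>N. \<forall>g\<in>S. (\<forall>i<N. g i = f i) \<longrightarrow> \<Phi> g z = \<Phi> f z"
proof -
  have "continuous_on S (\<lambda>g. \<Phi> g z)"
    using continuous_on_product_then_coordinatewise[OF assms(1)] .
  then obtain A where A: "open A" "A \<inter> S = (\<lambda>g. \<Phi> g z) -` {\<Phi> f z} \<inter> S"
    unfolding continuous_on_open_invariant by (meson open_discrete)
  obtain X where X: "f \<in> (\<Pi>\<^sub>E i\<in>UNIV. X i)" "finite {i. X i \<noteq> topspace euclidean}"
     "(\<Pi>\<^sub>E i\<in>UNIV. X i) \<subseteq> A"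
    using product_topology_open_contains_basis[of "\<lambda>i. euclidean" UNIV A f] A assms(2)
    unfolding open_fun_def by blast
  then obtain N where N: "\<forall>i\<in>{i. X i \<noteq> UNIV}. i < N" by (metis finite_nat_set_iff_bounded topspace_euclidean)
  have "g \<in> A" if "\<forall>i<N. g i = f i" for g
  proof -
    have "g i \<in> X i" for i using that X(1) N by (cases "i < N") (auto simp: PiE_iff, metis UNIV_I)
    then show ?thesis using X(3) by (auto simp: PiE_iff)
  qed
  then show ?thesis using A assms(2) by blast
qed

definition majorant :: "(nat \<Rightarrow> nat) \<Rightarrow> nat \<Rightarrow> nat" where
  "majorant b k = Suc k + (\<Sum>i\<le>k. b i)"

lemma strict_mono_majorant: "strict_mono (majorant b)"
  by (rule strict_monoI_Suc) (simp add: majorant_def)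

lemma Suc_le_majorant: "Suc k \<le> majorant b k"
  by (simp add: majorant_def)

lemma le_majorant: "b k \<le> majorant b k"
  using member_le_sum[of k "{..k}" b] by (simp add: majorant_def)

text \<open>The exponent 5: each \<open>\<alpha>\<close>-step of the chain of transpositions costs \<open>B\<^sup>4\<close>, and the
  remaining factor \<open>B\<close> absorbs the linear offsets of the counting argument.\<close>
definition escape_bound :: "(nat \<Rightarrow> nat \<Rightarrow> nat) \<Rightarrow> nat \<Rightarrow> nat" where
  "escape_bound \<beta> k = Suc k + (\<Sum>m\<le>k. (majorant (\<beta> m) ^^ 5) k)"

lemma Suc_le_escape_bound: "Suc k \<le> escape_bound \<beta> k"
  by (simp add: escape_bound_def)

lemma majorant_funpow_le_escape_bound: "n \<le> k \<Longrightarrow> (majorant (\<beta> n) ^^ 5) k \<le> escape_bound \<beta> k"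
  using member_le_sum[of n "{..k}" "\<lambda>m. (majorant (\<beta> m) ^^ 5) k"] by (simp add: escape_bound_def)

definition window :: "nat \<Rightarrow> (nat \<Rightarrow> nat) \<Rightarrow> (nat \<Rightarrow> nat) set" where
  "window M \<alpha> = insert id {tr p q |p q. M \<le> p \<and> p < q \<and> q \<le> \<alpha> p}"

locale Sinf_embedding =
  fixes \<Phi> :: "(nat \<Rightarrow> nat) \<Rightarrow> nat \<Rightarrow> nat"
  assumes hom: "\<Phi> \<in> hom (BijGroup (UNIV :: nat set)) (BijGroup (UNIV :: nat set))"
    and inj: "inj_on \<Phi> Sinf"
    and cont: "continuous_on Sinf \<Phi>"
begin

lemma bij_\<Phi>: "bij f \<Longrightarrow> bij (\<Phi> f)"
  using hom by (auto simp: hom_def BijGroup_def Bij_def)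

lemma \<Phi>_comp:
  assumes "bij f" "bij g"
  shows "\<Phi> (f \<circ> g) = \<Phi> f \<circ> \<Phi> g"
proof -
  have "compose UNIV f' g' = f' \<circ> g'" for f' g' :: "nat \<Rightarrow> nat"
    by (simp add: compose_def fun_eq_iff)
  then show ?thesis using hom assms bij_\<Phi> by (auto simp: hom_def BijGroup_def Bij_def)
qed

lemma \<Phi>_comp3: "bij f \<Longrightarrow> bij g \<Longrightarrow> bij h \<Longrightarrow> \<Phi> (f \<circ> g \<circ> h) = \<Phi> f \<circ> \<Phi> g \<circ> \<Phi> h"
  by (simp add: \<Phi>_comp bij_comp)

lemma \<Phi>_id: "\<Phi> id = id"
proof -
  have "\<Phi> id \<circ> \<Phi> id = \<Phi> id" using \<Phi>_comp[of id id] by simp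
  moreover have "inj (\<Phi> id)" using bij_\<Phi>[of id] bij_is_inj by auto
  ultimately show ?thesis by (metis comp_apply eq_id_iff injD)
qed

lemma \<Phi>_tr_involutory: "\<Phi> (tr a b) (\<Phi> (tr a b) y) = y"
  using \<Phi>_comp[of "tr a b" "tr a b"] \<Phi>_id by (metis bij_transpose comp_apply id_apply transpose_comp_involutory)

lemma eventually_fixes: "\<exists>N. \<forall>g. bij g \<longrightarrow> (\<forall>i<N. g i = i) \<longrightarrow> \<Phi> g x = x"
  using continuous_on_finite_prefix[OF cont, of id x] \<Phi>_id by (auto simp: Sinf_def)

lemma orbit_collision_fixes:
  assumes far: "\<And>k k'. M' \<le> k \<Longrightarrow> M' \<le> k' \<Longrightarrow> \<Phi> (tr k k') x = x"
    and "a < M'" and "\<not> inj_on (\<lambda>k. \<Phi> (tr a k) x) {M'..}"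
  shows "\<Phi> (tr a M') x = x"
proof -
  obtain k k' where kk: "M' \<le> k" "M' \<le> k'" "k \<noteq> k'" "\<Phi> (tr a k) x = \<Phi> (tr a k') x"
    using assms(3) unfolding inj_on_def by auto
  have "tr a k' = tr a k \<circ> tr a k' \<circ> tr k k'"
    using kk \<open>a < M'\<close> by (auto simp: fun_eq_iff Transposition.transpose_def)
  then have k': "\<Phi> (tr a k') x = x"
    using \<Phi>_comp3 far[OF kk(1,2)] kk(4) \<Phi>_tr_involutory by (metis bij_transpose comp_apply)
  show ?thesis
  proof (cases "k' = M'")
    case False
    then have "tr a M' = tr k' M' \<circ> tr a k' \<circ> tr k' M'"
      using kk \<open>a < M'\<close> by (auto simp: fun_eq_iff Transposition.transpose_def)
    then show ?thesis using \<Phi>_comp3 k' far kk by (metis bij_transpose comp_apply order_refl)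
  qed (use k' in simp)
qed

text \<open>\<open>\<Phi> (tr M (Suc M))\<close> moves some \<open>x\<close>; as \<open>tr M (Suc M)\<close> is a product of \<open>tr M M'\<close> and
  \<open>tr M' (Suc M)\<close>, not both of them can fix \<open>x\<close>.\<close>
lemma transposition_orbit_inj:
  "\<exists>x M' a. Suc (Suc M) \<le> M' \<and> a \<in> {M, Suc M} \<and> inj_on (\<lambda>k. \<Phi> (tr a k) x) {M'..}"
proof -
  have "\<Phi> (tr M (Suc M)) \<noteq> \<Phi> id"
    using inj transpose_eq_id_iff[of M "Suc M"] by (auto simp: inj_on_def Sinf_def)
  then obtain x where x: "\<Phi> (tr M (Suc M)) x \<noteq> x" using \<Phi>_id by (metis eq_id_iff)
  obtain N where N: "\<forall>g. bij g \<longrightarrow> (\<forall>i<N. g i = i) \<longrightarrow> \<Phi> g x = x"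
    using eventually_fixes by blast
  define M' where "M' = max N (Suc (Suc M))"
  have far: "\<Phi> (tr k k') x = x" if "M' \<le> k" "M' \<le> k'" for k k'
    using N that by (auto simp: M'_def)
  have "\<exists>a\<in>{M, Suc M}. inj_on (\<lambda>k. \<Phi> (tr a k) x) {M'..}"
  proof (rule ccontr)
    assume "\<not> ?thesis"
    then have fixed: "\<Phi> (tr a M') x = x" if "a \<in> {M, Suc M}" for a
      by (intro orbit_collision_fixes[OF far]) (use that in \<open>auto simp: M'_def\<close>)
    have "\<Phi> (tr M M') x = x" "\<Phi> (tr M' (Suc M)) x = x"
      using fixed[of M] fixed[of "Suc M"] by (simp_all add: transpose_commute)
    moreover have "tr M (Suc M) = tr M M' \<circ> tr M' (Suc M) \<circ> tr M M'"
      by (rule transpose_comp_triple[symmetric]) (auto simp: M'_def)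
    ultimately show False using x \<Phi>_comp3 by (metis bij_transpose comp_apply)
  qed
  moreover have "Suc (Suc M) \<le> M'" by (simp add: M'_def)
  ultimately show ?thesis by blast
qed

lemma transposition_chain_bound:
  assumes B: "mono B" "\<And>k. k \<le> B k" and \<alpha>: "\<And>k. Suc k \<le> \<alpha> k"
    and window_bound: "\<And>p q. M \<le> p \<Longrightarrow> p < q \<Longrightarrow> q \<le> \<alpha> p \<Longrightarrow> bounded_by (B ^^ 2) (\<Phi> (tr p q))"
    and "M \<le> a"
  shows "a < k \<Longrightarrow> k \<le> (\<alpha> ^^ Suc r) a \<Longrightarrow> bounded_by (B ^^ (4 * r + 2)) (\<Phi> (tr a k))"
proof (induction r arbitrary: k)
  case 0
  then have "bounded_by (B ^^ 2) (\<Phi> (tr a k))" using window_bound \<open>M \<le> a\<close> by simp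
  moreover have "4 * 0 + 2 = (2 :: nat)" by simp
  ultimately show ?case by metis
next
  case (Suc r)
  define c where "c = (\<alpha> ^^ Suc r) a"
  have "a < c" using funpow_ge_add[OF \<alpha>, of a "Suc r"] by (simp add: c_def)
  show ?case
  proof (cases "k \<le> c")
    case True
    have "bounded_by (B ^^ (4 * r + 2)) (\<Phi> (tr a k))"
      using Suc.IH[OF Suc.prems(1) True[unfolded c_def]] .
    then show ?thesis by (rule bounded_by_funpow_mono[OF B, rotated]) simp
  next
    case False
    have "k \<le> \<alpha> c" using Suc.prems(2) by (simp add: c_def)
    then have ck: "bounded_by (B ^^ 2) (\<Phi> (tr c k))"
      using window_bound[of c k] \<open>M \<le> a\<close> \<open>a < c\<close> False by linarith
    have ac: "bounded_by (B ^^ (4 * r + 2)) (\<Phi> (tr a c))"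
      using Suc.IH[OF \<open>a < c\<close>[unfolded c_def] order_refl] unfolding c_def .
    have "tr a k = tr c k \<circ> tr a c \<circ> tr c k"
      using \<open>a < c\<close> False by (auto simp: fun_eq_iff Transposition.transpose_def)
    then have "\<Phi> (tr a k) = \<Phi> (tr c k) \<circ> \<Phi> (tr a c) \<circ> \<Phi> (tr c k)"
      by (simp add: \<Phi>_comp3)
    moreover have "bounded_by (B ^^ ((2 + (4 * r + 2)) + 2)) (\<Phi> (tr c k) \<circ> \<Phi> (tr a c) \<circ> \<Phi> (tr c k))"
      using bounded_by_comp[OF B(1) bij_comp bij_\<Phi> bounded_by_comp[OF B(1) _ _ ck ac] ck]
      by (simp add: bij_\<Phi>)
    moreover have "(2 + (4 * r + 2)) + 2 = 4 * Suc r + 2" by simp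
    ultimately show ?thesis by metis
  qed
qed

lemma bounded_window_images_impossible:
  assumes B: "strict_mono B" "\<And>k. Suc k \<le> B k"
    and \<alpha>: "\<And>k. Suc k \<le> \<alpha> k" "\<And>k. n \<le> k \<Longrightarrow> (B ^^ 5) k \<le> \<alpha> k"
    and "n \<le> M"
    and window_bound: "\<And>p q. M \<le> p \<Longrightarrow> p < q \<Longrightarrow> q \<le> \<alpha> p \<Longrightarrow> bounded_by (B ^^ 2) (\<Phi> (tr p q))"
  shows False
proof -
  obtain x M' a where M': "Suc (Suc M) \<le> M'" and a: "a \<in> {M, Suc M}"
    and orbit: "inj_on (\<lambda>k. \<Phi> (tr a k) x) {M'..}"
    using transposition_orbit_inj by blast
  have "mono B" and B_ge: "\<And>k. k \<le> B k" using B strict_mono_mono Suc_leD by blast+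
  define r where "r = x + M'"
  define R where "R = (\<alpha> ^^ Suc r) a"
  define E where "E = B ^^ (4 * r + 2)"
  have "mono E" unfolding E_def by (rule strict_mono_mono[OF strict_mono_funpow[OF B(1)]])
  have "\<Phi> (tr a k) x \<le> E x" if "M' \<le> k" "k \<le> R" for k
  proof -
    have "bounded_by E (\<Phi> (tr a k))" unfolding E_def
      by (rule transposition_chain_bound[OF \<open>mono B\<close> B_ge \<alpha>(1) window_bound])
        (use a M' that in \<open>auto simp: R_def\<close>)
    then show ?thesis by (simp add: bounded_by_def)
  qed
  then have maps: "(\<lambda>k. \<Phi> (tr a k) x) ` {M'..R} \<subseteq> {0..E x}" by auto
  \<comment> \<open>pigeonhole: \<open>R - M' + 1\<close> distinct values below \<open>E x\<close>, but \<open>E x + M' + 1 \<le> R\<close>\<close>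
  have "E x + (M' + 1) \<le> E (x + (M' + 1))"
    unfolding E_def by (rule strict_mono_add_le[OF strict_mono_funpow[OF B(1)]])
  also have "\<dots> \<le> E ((B ^^ (r + 3)) a)"
    using funpow_ge_add[OF B(2), of a "r + 3"] \<open>mono E\<close> by (auto simp: r_def intro: monoD)
  also have "\<dots> = (B ^^ (5 * Suc r)) a"
    using funpow_add[of "4 * r + 2" "r + 3" B] by (simp add: E_def algebra_simps)
  also have "\<dots> \<le> R"
    unfolding R_def by (rule funpow_mult_le_funpow[OF \<open>mono B\<close> \<alpha>(1)]) (use \<alpha>(2) a \<open>n \<le> M\<close> in auto)
  finally have "E x + M' + 1 \<le> R" by simp
  moreover have "card {M'..R} \<le> card {0..E x}"
    using card_inj_on_le[OF inj_on_subset[OF orbit] maps] by auto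
  ultimately show False by simp
qed

lemma window_escape:
  assumes "bij h" "n \<le> M" "\<And>k. Suc k \<le> \<alpha> k" "\<And>k. n \<le> k \<Longrightarrow> (majorant b ^^ 5) k \<le> \<alpha> k"
  shows "\<exists>g\<in>window M \<alpha>. \<Phi> (h \<circ> g) \<notin> K b"
proof (rule ccontr)
  assume "\<not> ?thesis"
  then have inK: "\<Phi> (h \<circ> g) \<in> K b" if "g \<in> window M \<alpha>" for g using that by blast
  define B where "B = majorant b"
  have bounded: "bounded_by (B ^^ 1) f" if "f \<in> K b" for f
    using that le_majorant[of b] by (auto simp: K_iff B_def intro: bounded_by_mono)
  have bij_h: "bij (\<Phi> h)" using assms(1) by (rule bij_\<Phi>)
  have h_bound: "bounded_by (B ^^ 1) (inv_into UNIV (\<Phi> h))"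
    using bounded_by_inv[OF bij_h bounded] inK[of id] by (simp add: window_def)
  have "bounded_by (B ^^ 2) (\<Phi> (tr p q))" if "M \<le> p" "p < q" "q \<le> \<alpha> p" for p q
  proof -
    have "\<Phi> (h \<circ> tr p q) = \<Phi> h \<circ> \<Phi> (tr p q)" using assms(1) by (simp add: \<Phi>_comp)
    then have "\<Phi> (tr p q) = inv_into UNIV (\<Phi> h) \<circ> \<Phi> (h \<circ> tr p q)"
      using bij_h by (simp add: o_assoc bij_is_inj inv_o_cancel)
    moreover have "bounded_by (B ^^ 1) (\<Phi> (h \<circ> tr p q))"
      using that by (intro bounded inK) (auto simp: window_def)
    then have "bounded_by (B ^^ (1 + 1)) (inv_into UNIV (\<Phi> h) \<circ> \<Phi> (h \<circ> tr p q))"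
      using assms(1) strict_mono_mono[OF strict_mono_majorant]
      by (intro bounded_by_comp[OF _ bij_imp_bij_inv[OF bij_h] bij_\<Phi> h_bound])
        (simp_all add: B_def bij_comp)
    ultimately show ?thesis by (metis one_add_one)
  qed
  then show False
    using bounded_window_images_impossible[OF strict_mono_majorant Suc_le_majorant assms(3,4,2)]
    by (simp add: B_def)
qed

lemma escape_extension:
  assumes h: "h \<in> K \<alpha>" "\<forall>i\<ge>M. h i = i" and "n \<le> M"
    and \<alpha>: "\<And>k. Suc k \<le> \<alpha> k" "\<And>k. n \<le> k \<Longrightarrow> (majorant b ^^ 5) k \<le> \<alpha> k"
  shows "\<exists>h' M'. (\<forall>i\<ge>M'. h' i = i) \<and> h' \<in> K \<alpha> \<and> M < M' \<and> (\<forall>i<M. h' i = h i)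
    \<and> (\<forall>g\<in>Sinf. (\<forall>i<M'. g i = h' i) \<longrightarrow> \<Phi> g \<notin> K b)"
proof -
  have "bij h" using h by (simp add: K_iff)
  obtain g where g: "g \<in> window M \<alpha>" and escapes: "\<Phi> (h \<circ> g) \<notin> K b"
    using window_escape[OF \<open>bij h\<close> \<open>n \<le> M\<close> \<alpha>] by blast
  obtain Q where g_fix: "\<forall>i\<ge>Q. g i = i" "\<forall>i<M. g i = i" and "h \<circ> g \<in> K \<alpha>"
  proof (cases "g = id")
    case True
    then show ?thesis using that[of 0] h by simp
  next
    case False
    then obtain p q where "g = tr p q" "M \<le> p" "p < q" "q \<le> \<alpha> p"
      using g by (auto simp: window_def)
    then show ?thesis
      using that[of "Suc q"] comp_transpose_in_K[OF h] Suc_leD[OF \<alpha>(1)] by simp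
  qed
  define h' where "h' = h \<circ> g"
  have "bij h'" using \<open>h \<circ> g \<in> K \<alpha>\<close> by (simp add: K_iff h'_def)
  then obtain z where z: "\<forall>f. f z = \<Phi> h' z \<longrightarrow> f \<notin> K b"
    using not_in_K_witness[OF bij_\<Phi>[OF \<open>bij h'\<close>]] escapes unfolding h'_def by blast
  obtain N where N: "\<forall>f\<in>Sinf. (\<forall>i<N. f i = h' i) \<longrightarrow> \<Phi> f z = \<Phi> h' z"
    using continuous_on_finite_prefix[OF cont, of h' z] \<open>bij h'\<close> by (auto simp: Sinf_def)
  define M' where "M' = N + Q + Suc M"
  have "\<forall>i\<ge>M'. h' i = i" using g_fix h by (simp add: h'_def M'_def)
  moreover have "\<forall>i<M. h' i = h i" using g_fix by (simp add: h'_def)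
  moreover have "\<forall>f\<in>Sinf. (\<forall>i<M'. f i = h' i) \<longrightarrow> \<Phi> f \<notin> K b"
    using N z by (simp add: M'_def)
  ultimately show ?thesis using \<open>h \<circ> g \<in> K \<alpha>\<close>
    by (intro exI[of _ h'] exI[of _ M']) (simp add: h'_def M'_def)
qed

end

theorem mainTheorem11:
  fixes \<beta> :: "nat \<Rightarrow> nat \<Rightarrow> nat"
  shows "\<exists>\<alpha> :: nat \<Rightarrow> nat. \<forall>\<Phi> :: (nat \<Rightarrow> nat) \<Rightarrow> (nat \<Rightarrow> nat).
           \<Phi> \<in> hom (BijGroup (UNIV :: nat set)) (BijGroup (UNIV :: nat set))
           \<and> inj_on \<Phi> Sinf \<and> continuous_on Sinf \<Phi>
           \<longrightarrow> \<not> (\<Phi> ` K \<alpha> \<subseteq> (\<Union>n. K (\<beta> n)))"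
proof (intro exI allI impI notI)
  fix \<Phi> :: "(nat \<Rightarrow> nat) \<Rightarrow> nat \<Rightarrow> nat"
  assume "\<Phi> \<in> hom (BijGroup UNIV) (BijGroup UNIV) \<and> inj_on \<Phi> Sinf \<and> continuous_on Sinf \<Phi>"
  then interpret Sinf_embedding \<Phi> by unfold_locales auto
  assume covered: "\<Phi> ` K (escape_bound \<beta>) \<subseteq> (\<Union>n. K (\<beta> n))"
  have "\<exists>f\<in>K (escape_bound \<beta>). \<forall>n. \<Phi> f \<notin> K (\<beta> n)"
    using Suc_leD[OF Suc_le_escape_bound]
    by (rule K_fusion) (rule escape_extension[OF _ _ _ Suc_le_escape_bound majorant_funpow_le_escape_bound])
  then show False using covered by blast
qed

end
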